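(* For every $n\in\{1,\dots,N\}$, the limits $-\lim_{\rho\to\infty}\frac{\log P^{(b)}_n(\rho)}{\log\rho}$ and $-\lim_{\rho\to\infty}\frac{\log P^{c}_n(\rho)}{\log\rho}$ exist and both equal $n\,m_s K$ (i.e., the diversity order of the $n$-th user under NOMA is $nm_sK$ for both $b$-bit discrete, $b\ge2$, and continuous phase shifts).
   Context: Fix integers $N\ge1$, $K\ge1$, $b\ge2$ and a real $\beta\in(0,1]$. Let $m_G,m_g\ge 1/2$ with $m_G\neq m_g$; put $m_s=\min\{m_G,m_g\}$. For $n=1,\dots,N$ and $k=1,\dots,K$ let $G_k^n,g_k^n$ be mutually independent complex random variables such that $|G_k^n|$ has the Nakagami density $f(x)=\frac{2m^m}{\Gamma(m)}x^{2m-1}e^{-mx^2}$ ($x\ge0$) with $m=m_G$, and $|g_k^n|$ has this density with $m=m_g$. Let $\Delta=2\pi/2^b$. For each $n$ fix a constant $\tilde\theta_n\in[0,2\pi)$ and set $\bar\theta_k^n=\tilde\theta_n-\arg(G_k^ng_k^n)$, $\hat\theta_k^n=\Delta(\lfloor\bar\theta_k^n/\Delta\rfloor+\tfrac12)$, $\epsilon_k^n=\hat\theta_k^n-\bar\theta_k^n$. Define $Y^{(n)}=\beta\big|\sum_{k=1}^K|G_k^n||g_k^n|e^{j\epsilon_k^n}\big|$ and $Y_c^{(n)}=\beta\sum_{k=1}^K|G_k^n||g_k^n|$; let $Y_1\le\dots\le Y_N$ and $Y_{c,1}\le\dots\le Y_{c,N}$ be the respective order statistics. NOMA parameters: $\alpha_1>\dots>\alpha_N>0$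 with $\sum_n\alpha_n=1$; $\tilde\gamma_l=2^{\tilde R_l}-1$ with target rates $\tilde R_l>0$, and $\alpha_l-\tilde\gamma_l\sum_{i=l+1}^N\alpha_i>0$ for $1\le l\le N-1$; transmit SNR $\rho>0$. For $l\le n$ set $\tilde\rho_{n\leftarrow l}=\frac{\tilde\gamma_l}{\rho(\alpha_l-\tilde\gamma_l\sum_{i=l+1}^N\alpha_i)}$ if $(l,n)\neq(N,N)$ and $\tilde\rho_{N\leftarrow N}=\frac{\tilde\gamma_N}{\rho\alpha_N}$; $\tilde\rho_{n,\max}=\max_{1\le l\le n}\tilde\rho_{n\leftarrow l}$. Outage probabilities: $P^{(b)}_n(\rho)=\Pr(Y_n^2<\tilde\rho_{n,\max})$, $P^{c}_n(\rho)=\Pr(Y_{c,n}^2<\tilde\rho_{n,\max})$. *)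

theory Defs
  imports "HOL-Probability.Probability"
begin

definition nakagami_pdf :: "real \<Rightarrow> real \<Rightarrow> real" where
  "nakagami_pdf m x =
     (if 0 \<le> x then 2 * m powr m / Gamma m * x powr (2*m - 1) * exp (- m * x\<^sup>2) else 0)"

definition qstep :: "nat \<Rightarrow> real" where
  "qstep b = 2 * pi / 2 ^ b"

definition quant_err :: "nat \<Rightarrow> real \<Rightarrow> real" where
  "quant_err b th = qstep b * (real_of_int \<lfloor>th / qstep b\<rfloor> + 1/2) - th"

definition theta_bar :: "real \<Rightarrow> complex \<Rightarrow> complex \<Rightarrow> real" where
  "theta_bar tht Gv gv = tht - Arg (Gv * gv)"

definition Y_disc :: "nat \<Rightarrow> real \<Rightarrow> nat \<Rightarrow> (nat \<Rightarrow> real)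
     \<Rightarrow> (nat \<Rightarrow> nat \<Rightarrow> 'a \<Rightarrow> complex) \<Rightarrow> (nat \<Rightarrow> nat \<Rightarrow> 'a \<Rightarrow> complex) \<Rightarrow> nat \<Rightarrow> 'a \<Rightarrow> real" where
  "Y_disc b \<beta> K tht G g n \<omega> =
     \<beta> * cmod (\<Sum>k=1..K. complex_of_real (cmod (G n k \<omega>) * cmod (g n k \<omega>))
                 * cis (quant_err b (theta_bar (tht n) (G n k \<omega>) (g n k \<omega>))))"

definition Y_cont :: "real \<Rightarrow> nat
     \<Rightarrow> (nat \<Rightarrow> nat \<Rightarrow> 'a \<Rightarrow> complex) \<Rightarrow> (nat \<Rightarrow> nat \<Rightarrow> 'a \<Rightarrow> complex) \<Rightarrow> nat \<Rightarrow> 'a \<Rightarrow> real" where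
  "Y_cont \<beta> K G g n \<omega> = \<beta> * (\<Sum>k=1..K. cmod (G n k \<omega>) * cmod (g n k \<omega>))"

definition ord_stat :: "nat \<Rightarrow> (nat \<Rightarrow> 'a \<Rightarrow> real) \<Rightarrow> nat \<Rightarrow> 'a \<Rightarrow> real" where
  "ord_stat N Y n \<omega> = sort (map (\<lambda>i. Y i \<omega>) [1..<Suc N]) ! (n - 1)"

definition gam :: "(nat \<Rightarrow> real) \<Rightarrow> nat \<Rightarrow> real" where
  "gam R l = 2 powr (R l) - 1"

definition rho_nl :: "nat \<Rightarrow> (nat \<Rightarrow> real) \<Rightarrow> (nat \<Rightarrow> real) \<Rightarrow> real \<Rightarrow> nat \<Rightarrow> nat \<Rightarrow> real" where
  "rho_nl N alpha R \<rho> n l =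
     (if l = N \<and> n = N then gam R N / (\<rho> * alpha N)
      else gam R l / (\<rho> * (alpha l - gam R l * (\<Sum>i=l+1..N. alpha i))))"

definition rho_max :: "nat \<Rightarrow> (nat \<Rightarrow> real) \<Rightarrow> (nat \<Rightarrow> real) \<Rightarrow> real \<Rightarrow> nat \<Rightarrow> real" where
  "rho_max N alpha R \<rho> n = Max ((\<lambda>l. rho_nl N alpha R \<rho> n l) ` {1..n})"

definition outage :: "'a measure \<Rightarrow> nat \<Rightarrow> (nat \<Rightarrow> 'a \<Rightarrow> real) \<Rightarrow> real \<Rightarrow> nat \<Rightarrow> real" where
  "outage M N Y thr n = measure M {\<omega> \<in> space M. (ord_stat N Y n \<omega>)\<^sup>2 < thr}"

end

theory Submission
  imports Defs "HOL-Real_Asymp.Real_Asymp"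
begin

text \<open>
  User \<open>n\<close> is in outage iff at least \<open>n\<close> of the \<open>N\<close> gains lie below \<open>s = sqrt \<rho>_max\<close>,
  and \<open>\<rho>_max\<close> is a fixed multiple of \<open>1/\<rho>\<close>; so it suffices to show that this probability is
  \<open>\<Theta>(s^(2 n m_s K))\<close> as \<open>s \<rightarrow> 0\<close>.

  For one cascaded amplitude \<open>|G||g|\<close>, let \<open>X\<close> be the factor with the smaller Nakagami
  parameter \<open>m_s\<close> and \<open>Y\<close> the other one. Conditioning on \<open>Y\<close>,
  \<open>P(XY \<le> s) \<le> E[min(1, C (s/Y)^(2 m_s))]\<close>, and this is \<open>O(s^(2 m_s))\<close> because the density of
  \<open>Y\<close> near \<open>0\<close> is \<open>O(y^(2 m' - 1))\<close> with \<open>m' > m_s\<close>; conversely \<open>X \<le> s\<close>, \<open>Y \<le> 1\<close> has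
  probability \<open>\<ge> c s^(2 m_s)\<close>. If at least \<open>n\<close> continuous-phase gains are below \<open>s\<close>, then
  for some \<open>n\<close>-set of users all \<open>n K\<close> cascades are \<open>\<le> s/\<beta>\<close>, and if all cascades of the
  first \<open>n\<close> users are \<open>\<le> s/(2\<beta>K)\<close>, then these users are below \<open>s\<close>; independence and a union
  bound over the \<open>n\<close>-sets give matching bounds of order \<open>s^(2 n m_s K)\<close>. A \<open>b\<close>-bit phase
  shifter errs by at most \<open>\<Delta>/2 \<le> \<pi>/4\<close>, which scales each gain by a factor in
  \<open>[cos (\<Delta>/2), 1]\<close> and hence only rescales \<open>s\<close>.

  The ordering and normalisation of the power coefficients, the range of the target phases and
  \<open>\<beta> \<le> 1\<close> are not needed; \<open>m_G, m_g > 0\<close> suffices.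
\<close>

section \<open>Nakagami amplitudes\<close>

lemma nn_integral_powr_atLeastAtMost_0:
  fixes a c u :: real
  assumes "0 < a" "0 \<le> u" "0 \<le> c"
  shows "(\<integral>\<^sup>+x. ennreal (c * x powr (a - 1)) * indicator {0..u} x \<partial>lborel) = ennreal (c * u powr a / a)"
proof -
  have "((\<lambda>x. x powr (a - 1)) has_integral (u powr a / a)) {0..u}"
    using has_integral_powr_from_0[of "a - 1" u] assms by simp
  then have "((\<lambda>x. c * x powr (a - 1)) has_integral c * u powr a / a) {0..u}"
    by (metis has_integral_mult_right times_divide_eq_right)
  then show ?thesis
    by (rule nn_integral_has_integral_lebesgue'[rotated]) (use assms in simp)
qed

lemma nakagami_pdf_nonneg: "0 < m \<Longrightarrow> 0 \<le> nakagami_pdf m x"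
  unfolding nakagami_pdf_def by (auto intro!: divide_nonneg_pos Gamma_real_pos)

lemma nakagami_pdf_le:
  assumes "0 < m" "0 \<le> x"
  shows "nakagami_pdf m x \<le> 2 * m powr m / Gamma m * x powr (2*m - 1)"
proof -
  have "0 \<le> 2 * m powr m / Gamma m * x powr (2*m - 1)"
    using assms by (simp add: Gamma_real_pos)
  from mult_left_mono[OF _ this, of "exp (- m * x\<^sup>2)" 1] show ?thesis
    using assms unfolding nakagami_pdf_def by simp
qed

lemma nakagami_pdf_ge:
  assumes "0 < m" "0 \<le> x" "x \<le> 1"
  shows "2 * m powr m / Gamma m * x powr (2*m - 1) * exp (- m) \<le> nakagami_pdf m x"
proof -
  have "exp (- m) \<le> exp (- m * x\<^sup>2)"
    using assms by (simp add: mult_left_le power_le_one)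
  moreover have "0 \<le> 2 * m powr m / Gamma m * x powr (2*m - 1)"
    using assms by (simp add: Gamma_real_pos)
  ultimately have "2 * m powr m / Gamma m * x powr (2*m - 1) * exp (- m)
      \<le> 2 * m powr m / Gamma m * x powr (2*m - 1) * exp (- m * x\<^sup>2)"
    by (rule mult_left_mono)
  then show ?thesis
    using assms unfolding nakagami_pdf_def by simp
qed

lemma nakagami_pdf_mult_powr_le:
  assumes "0 < m" "0 \<le> e" "0 \<le> c"
  shows "ennreal (nakagami_pdf m y) * (if 0 < y then ennreal (c * y powr (- e)) else 1)
    \<le> ennreal c * (ennreal (2 * m powr m / Gamma m * y powr (2*m - e - 1)) * indicator {0..1} y
                    + ennreal (nakagami_pdf m y))"
proof (cases "0 < y")
  case True
  have "nakagami_pdf m y * y powr (- e)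
      \<le> 2 * m powr m / Gamma m * y powr (2*m - e - 1) * indicator {0..1} y + nakagami_pdf m y"
  proof (cases "y \<le> 1")
    case True
    have "nakagami_pdf m y * y powr (- e) \<le> 2 * m powr m / Gamma m * y powr (2*m - 1) * y powr (- e)"
      using assms \<open>0 < y\<close> by (intro mult_right_mono nakagami_pdf_le) auto
    also have "\<dots> = 2 * m powr m / Gamma m * y powr (2*m - e - 1)"
      using \<open>0 < y\<close> by (simp add: powr_add[symmetric] algebra_simps)
    finally show ?thesis
      using True \<open>0 < y\<close> assms nakagami_pdf_nonneg[of m y] by simp
  next
    case False
    then have "y powr (- e) \<le> y powr 0"
      using assms by (intro powr_mono) auto
    then have "nakagami_pdf m y * y powr (- e) \<le> nakagami_pdf m y"
      using False assms nakagami_pdf_nonneg[of m y] by (simp add: mult_left_le)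
    then show ?thesis
      using False by simp
  qed
  then have "ennreal (c * (nakagami_pdf m y * y powr (- e)))
      \<le> ennreal (c * (2 * m powr m / Gamma m * y powr (2*m - e - 1) * indicator {0..1} y + nakagami_pdf m y))"
    using assms by (intro ennreal_leI mult_left_mono)
  then show ?thesis
    using True assms nakagami_pdf_nonneg[of m y]
    by (cases "y \<le> 1") (simp_all add: Gamma_real_pos ennreal_mult' ennreal_plus mult_ac)
qed (simp add: nakagami_pdf_def)

context prob_space
begin

lemma distributed_prob_atMost_le:
  assumes D: "distributed M lborel X (\<lambda>x. ennreal (f x))"
    and f_neg: "\<And>x. x < 0 \<Longrightarrow> f x = 0"
    and f_le: "\<And>x. 0 \<le> x \<Longrightarrow> x \<le> u \<Longrightarrow> f x \<le> c * x powr (a - 1)"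
    and "0 < a" "0 \<le> u" "0 \<le> c"
  shows "prob {\<omega> \<in> space M. X \<omega> \<le> u} \<le> c * u powr a / a"
proof -
  have "emeasure M {\<omega> \<in> space M. X \<omega> \<le> u} = (\<integral>\<^sup>+x. ennreal (f x) * indicator {..u} x \<partial>lborel)"
    using distributed_emeasure[OF D, of "{..u}"] by (simp add: vimage_def Int_def conj_commute)
  also have "\<dots> \<le> (\<integral>\<^sup>+x. ennreal (c * x powr (a - 1)) * indicator {0..u} x \<partial>lborel)"
    using f_neg f_le by (intro nn_integral_mono) (auto simp: indicator_def not_le intro: ennreal_leI)
  also have "\<dots> = ennreal (c * u powr a / a)"
    using assms by (intro nn_integral_powr_atLeastAtMost_0)
  finally show ?thesis
    using assms by (simp add: emeasure_eq_measure)
qed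

lemma distributed_prob_atLeastAtMost_ge:
  assumes D: "distributed M lborel X (\<lambda>x. ennreal (f x))"
    and f_ge: "\<And>x. 0 \<le> x \<Longrightarrow> x \<le> u \<Longrightarrow> c * x powr (a - 1) \<le> f x"
    and "0 < a" "0 \<le> u" "0 \<le> c"
  shows "c * u powr a / a \<le> prob {\<omega> \<in> space M. X \<omega> \<in> {0..u}}"
proof -
  have "ennreal (c * u powr a / a) = (\<integral>\<^sup>+x. ennreal (c * x powr (a - 1)) * indicator {0..u} x \<partial>lborel)"
    using assms by (intro nn_integral_powr_atLeastAtMost_0[symmetric])
  also have "\<dots> \<le> (\<integral>\<^sup>+x. ennreal (f x) * indicator {0..u} x \<partial>lborel)"
    using f_ge by (intro nn_integral_mono) (auto simp: indicator_def intro: ennreal_leI)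
  also have "\<dots> = emeasure M {\<omega> \<in> space M. X \<omega> \<in> {0..u}}"
    using distributed_emeasure[OF D, of "{0..u}"] by (simp add: vimage_def Int_def conj_commute)
  finally show ?thesis
    by (simp add: emeasure_eq_measure)
qed

lemma nakagami_prob_atMost_le:
  assumes D: "distributed M lborel X (\<lambda>x. ennreal (nakagami_pdf m x))" and "0 < m" "0 \<le> u"
  shows "prob {\<omega> \<in> space M. X \<omega> \<le> u} \<le> m powr m / Gamma m / m * u powr (2*m)"
proof -
  have "prob {\<omega> \<in> space M. X \<omega> \<le> u} \<le> 2 * m powr m / Gamma m * u powr (2*m) / (2*m)"
    using assms nakagami_pdf_le[of m]
    by (intro distributed_prob_atMost_le[OF D]) (auto simp: nakagami_pdf_def Gamma_real_pos)
  then show ?thesis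
    using assms by simp
qed

lemma nakagami_prob_atLeastAtMost_ge:
  assumes D: "distributed M lborel X (\<lambda>x. ennreal (nakagami_pdf m x))" and "0 < m" "0 \<le> u" "u \<le> 1"
  shows "m powr m / Gamma m / m * exp (- m) * u powr (2*m) \<le> prob {\<omega> \<in> space M. X \<omega> \<in> {0..u}}"
proof -
  have "2 * m powr m / Gamma m * exp (- m) * u powr (2*m) / (2*m) \<le> prob {\<omega> \<in> space M. X \<omega> \<in> {0..u}}"
    using assms nakagami_pdf_ge[of m]
    by (intro distributed_prob_atLeastAtMost_ge[OF D]) (auto simp: Gamma_real_pos mult_ac)
  then show ?thesis
    using assms by simp
qed

lemma nakagami_nn_integral_powr_le:
  assumes D: "distributed M lborel Y (\<lambda>x. ennreal (nakagami_pdf m x))"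
    and "0 < e" "e < 2*m" "0 \<le> c"
  shows "(\<integral>\<^sup>+\<omega>. (if 0 < Y \<omega> then ennreal (c * Y \<omega> powr (- e)) else 1) \<partial>M)
    \<le> ennreal (c * (2 * m powr m / Gamma m / (2*m - e) + 1))"
proof -
  define cY where "cY = 2 * m powr m / Gamma m"
  have "0 < m" "0 \<le> cY"
    using assms by (auto simp: cY_def Gamma_real_pos)
  have [measurable]: "nakagami_pdf m \<in> borel_measurable borel"
    using distributed_real_measurable[OF nakagami_pdf_nonneg[OF \<open>0 < m\<close>] D] by simp
  have "(\<integral>\<^sup>+\<omega>. (if 0 < Y \<omega> then ennreal (c * Y \<omega> powr (- e)) else 1) \<partial>M)
      = (\<integral>\<^sup>+y. ennreal (nakagami_pdf m y) * (if 0 < y then ennreal (c * y powr (- e)) else 1) \<partial>lborel)"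
    by (rule distributed_nn_integral[OF D, symmetric]) simp
  also have "\<dots> \<le> (\<integral>\<^sup>+y. ennreal c * (ennreal (cY * y powr (2*m - e - 1)) * indicator {0..1} y
                                           + ennreal (nakagami_pdf m y)) \<partial>lborel)"
    unfolding cY_def using assms \<open>0 < m\<close> by (intro nn_integral_mono nakagami_pdf_mult_powr_le) auto
  also have "\<dots> = ennreal c * ((\<integral>\<^sup>+y. ennreal (cY * y powr (2*m - e - 1)) * indicator {0..1} y \<partial>lborel)
                                + (\<integral>\<^sup>+y. ennreal (nakagami_pdf m y) \<partial>lborel))"
    by (simp add: nn_integral_cmult nn_integral_add)
  also have "(\<integral>\<^sup>+y. ennreal (cY * y powr (2*m - e - 1)) * indicator {0..1} y \<partial>lborel)
      = ennreal (cY / (2*m - e))"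
    using nn_integral_powr_atLeastAtMost_0[of "2*m - e" 1 cY] assms \<open>0 \<le> cY\<close>
    by (simp add: diff_diff_eq)
  also have "(\<integral>\<^sup>+y. ennreal (nakagami_pdf m y) \<partial>lborel) = 1"
    using distributed_emeasure[OF D, of UNIV] by (simp add: emeasure_space_1)
  finally show ?thesis
    using assms \<open>0 \<le> cY\<close> by (simp add: cY_def ennreal_mult ennreal_plus)
qed

lemma prob_mult_le_nn_integral:
  fixes X Y :: "'a \<Rightarrow> real"
  assumes ind: "indep_var borel Y borel X" and [measurable]: "h \<in> borel_measurable borel"
    and h: "\<And>y. 0 < y \<Longrightarrow> prob {\<omega> \<in> space M. X \<omega> \<le> r / y} \<le> h y"
  shows "emeasure M {\<omega> \<in> space M. X \<omega> * Y \<omega> \<le> r}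
    \<le> (\<integral>\<^sup>+\<omega>. (if 0 < Y \<omega> then ennreal (h (Y \<omega>)) else 1) \<partial>M)"
proof -
  have [measurable]: "random_variable borel X" "random_variable borel Y"
    using indep_var_rv1[OF ind] indep_var_rv2[OF ind] by auto
  interpret PX: prob_space "distr M borel X"
    by (rule prob_space_distr) simp
  define S where "S = {p :: real \<times> real. snd p * fst p \<le> r}"
  have S_sets: "S \<in> sets (borel \<Otimes>\<^sub>M borel)"
    unfolding S_def borel_prod by (intro borel_closed closed_Collect_le continuous_intros)
  have "emeasure M {\<omega> \<in> space M. X \<omega> * Y \<omega> \<le> r} = emeasure (distr M (borel \<Otimes>\<^sub>M borel) (\<lambda>\<omega>. (Y \<omega>, X \<omega>))) S"
    by (subst emeasure_distr[OF _ S_sets]) (auto simp: S_def vimage_def Int_def conj_commute)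
  also have "\<dots> = emeasure (distr M borel Y \<Otimes>\<^sub>M distr M borel X) S"
    using indep_var_distribution_eq[of borel Y borel X] ind by simp
  also have "\<dots> = (\<integral>\<^sup>+y. emeasure (distr M borel X) (Pair y -` S) \<partial>distr M borel Y)"
    using S_sets by (intro PX.emeasure_pair_measure_alt) simp
  also have "\<dots> \<le> (\<integral>\<^sup>+y. (if 0 < y then ennreal (h y) else 1) \<partial>distr M borel Y)"
  proof (intro nn_integral_mono)
    fix y :: real
    show "emeasure (distr M borel X) (Pair y -` S) \<le> (if 0 < y then ennreal (h y) else 1)"
    proof (cases "0 < y")
      case True
      then have "Pair y -` S = {..r / y}"
        by (auto simp: S_def field_simps)
      then have "emeasure (distr M borel X) (Pair y -` S) = prob {\<omega> \<in> space M. X \<omega> \<le> r / y}"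
        by (simp add: emeasure_distr emeasure_eq_measure vimage_def Int_def conj_commute)
      then show ?thesis
        using True h[of y] by (simp add: ennreal_leI)
    qed (simp add: PX.emeasure_le_1)
  qed
  also have "\<dots> = (\<integral>\<^sup>+\<omega>. (if 0 < Y \<omega> then ennreal (h (Y \<omega>)) else 1) \<partial>M)"
    by (intro nn_integral_distr) auto
  finally show ?thesis .
qed

lemma nakagami_product_prob_le:
  fixes X Y :: "'a \<Rightarrow> real"
  assumes ind: "indep_var borel Y borel X"
    and DX: "distributed M lborel X (\<lambda>x. ennreal (nakagami_pdf mx x))"
    and DY: "distributed M lborel Y (\<lambda>x. ennreal (nakagami_pdf my x))"
    and "0 < mx" "mx < my" "0 < r"
  shows "prob {\<omega> \<in> space M. X \<omega> * Y \<omega> \<le> r}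
    \<le> mx powr mx / Gamma mx / mx * (2 * my powr my / Gamma my / (2*my - 2*mx) + 1) * r powr (2*mx)"
proof -
  define c where "c = mx powr mx / Gamma mx / mx * r powr (2*mx)"
  have "0 \<le> c"
    using assms by (simp add: c_def Gamma_real_pos)
  have "prob {\<omega> \<in> space M. X \<omega> \<le> r / y} \<le> c * y powr (- 2*mx)" if "0 < y" for y
  proof -
    have "prob {\<omega> \<in> space M. X \<omega> \<le> r / y} \<le> mx powr mx / Gamma mx / mx * (r / y) powr (2*mx)"
      using assms that by (intro nakagami_prob_atMost_le[OF DX]) auto
    then show ?thesis
      using assms that by (simp add: c_def powr_divide powr_minus_divide)
  qed
  then have "emeasure M {\<omega> \<in> space M. X \<omega> * Y \<omega> \<le> r}
      \<le> (\<integral>\<^sup>+\<omega>. (if 0 < Y \<omega> then ennreal (c * Y \<omega> powr (- (2*mx))) else 1) \<partial>M)"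
    by (intro prob_mult_le_nn_integral[OF ind]) auto
  also have "\<dots> \<le> ennreal (c * (2 * my powr my / Gamma my / (2*my - 2*mx) + 1))"
    using assms \<open>0 \<le> c\<close> by (intro nakagami_nn_integral_powr_le[OF DY]) auto
  finally show ?thesis
    using assms \<open>0 \<le> c\<close>
    by (simp add: emeasure_eq_measure c_def mult_ac Gamma_real_pos ennreal_le_iff)
qed

lemma nakagami_product_prob_ge:
  fixes X Y :: "'a \<Rightarrow> real"
  assumes ind: "indep_var borel X borel Y"
    and DX: "distributed M lborel X (\<lambda>x. ennreal (nakagami_pdf mx x))"
    and DY: "distributed M lborel Y (\<lambda>x. ennreal (nakagami_pdf my x))"
    and "0 < mx" "0 < my" "0 \<le> w" "w \<le> 1"
  shows "mx powr mx / Gamma mx / mx * exp (- mx) * (my powr my / Gamma my / my * exp (- my)) * w powr (2*mx)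
    \<le> prob {\<omega> \<in> space M. X \<omega> * Y \<omega> \<le> w}"
proof -
  have [measurable]: "random_variable borel X" "random_variable borel Y"
    using indep_var_rv1[OF ind] indep_var_rv2[OF ind] by auto
  have "mx powr mx / Gamma mx / mx * exp (- mx) * w powr (2*mx) * (my powr my / Gamma my / my * exp (- my) * 1 powr (2*my))
      \<le> prob {\<omega> \<in> space M. X \<omega> \<in> {0..w}} * prob {\<omega> \<in> space M. Y \<omega> \<in> {0..1}}"
    using assms
    by (intro mult_mono nakagami_prob_atLeastAtMost_ge[OF DX] nakagami_prob_atLeastAtMost_ge[OF DY])
       (auto simp: Gamma_real_pos)
  also have "\<dots> = prob {\<omega> \<in> space M. X \<omega> \<in> {0..w} \<and> Y \<omega> \<in> {0..1}}"
    using indep_varD[OF ind, of "{0..w}" "{0..1}"] by (simp add: vimage_def Int_def conj_ac)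
  also have "\<dots> \<le> prob {\<omega> \<in> space M. X \<omega> * Y \<omega> \<le> w}"
    using mult_mono[of _ w _ 1] by (intro finite_measure_mono) auto
  finally show ?thesis
    by (simp add: mult_ac)
qed

end

section \<open>Order statistics and outage events\<close>

lemma sorted_nth_less_iff:
  fixes ys :: "'a :: linorder list"
  assumes "sorted ys" "j < length ys"
  shows "ys ! j < c \<longleftrightarrow> Suc j \<le> card {i. i < length ys \<and> ys ! i < c}"
proof
  assume "ys ! j < c"
  then have "{..j} \<subseteq> {i. i < length ys \<and> ys ! i < c}"
    using assms by (auto intro: le_less_trans[OF sorted_nth_mono])
  from card_mono[OF _ this] show "Suc j \<le> card {i. i < length ys \<and> ys ! i < c}"
    by simp
next
  assume card: "Suc j \<le> card {i. i < length ys \<and> ys ! i < c}"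
  show "ys ! j < c"
  proof (rule ccontr)
    assume "\<not> ys ! j < c"
    then have "{i. i < length ys \<and> ys ! i < c} \<subseteq> {..<j}"
      using assms by (auto simp: not_less) (meson leI leD order.trans sorted_nth_mono)
    from card_mono[OF _ this] show False
      using card by simp
  qed
qed

lemma ord_stat_less_iff:
  assumes "n \<in> {1..N}"
  shows "ord_stat N Y n \<omega> < c \<longleftrightarrow> n \<le> card {i \<in> {1..N}. Y i \<omega> < c}"
proof -
  define xs where "xs = map (\<lambda>i. Y i \<omega>) [1..<Suc N]"
  have "ord_stat N Y n \<omega> < c \<longleftrightarrow> Suc (n - 1) \<le> card {i. i < length (sort xs) \<and> sort xs ! i < c}"
    unfolding ord_stat_def xs_def[symmetric] using assms by (intro sorted_nth_less_iff) (auto simp: xs_def)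
  also have "card {i. i < length (sort xs) \<and> sort xs ! i < c} = length (filter (\<lambda>x. x < c) (sort xs))"
    by (rule length_filter_conv_card[symmetric])
  also have "\<dots> = length (filter (\<lambda>x. x < c) xs)"
    by (metis mset_filter mset_sort size_mset)
  also have "\<dots> = length (filter (\<lambda>i. Y i \<omega> < c) [1..<Suc N])"
    by (simp add: xs_def filter_map comp_def)
  also have "\<dots> = card {i \<in> {1..N}. Y i \<omega> < c}"
    by (subst distinct_card[symmetric]) (auto intro!: arg_cong[where f = card])
  finally show ?thesis
    using assms by simp
qed

definition prob_n_below :: "'a measure \<Rightarrow> nat \<Rightarrow> (nat \<Rightarrow> 'a \<Rightarrow> real) \<Rightarrow> nat \<Rightarrow> real \<Rightarrow> real" where
  "prob_n_below M N Y n s = measure M {\<omega> \<in> space M. n \<le> card {i \<in> {1..N}. Y i \<omega> < s}}"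

lemma outage_eq_prob_n_below:
  assumes "n \<in> {1..N}" "\<And>i \<omega>. 0 \<le> Y i \<omega>" "0 < t"
  shows "outage M N Y t n = prob_n_below M N Y n (sqrt t)"
proof -
  have "ord_stat N Y n \<omega> \<in> set (sort (map (\<lambda>i. Y i \<omega>) [1..<Suc N]))" for \<omega>
    unfolding ord_stat_def using assms(1) by (intro nth_mem) auto
  then have "0 \<le> ord_stat N Y n \<omega>" for \<omega>
    using assms(2) by (metis ex_map_conv set_sort)
  then have "(ord_stat N Y n \<omega>)\<^sup>2 < t \<longleftrightarrow> ord_stat N Y n \<omega> < sqrt t" for \<omega>
    using assms(3) by (metis abs_of_nonneg real_sqrt_abs real_sqrt_less_iff real_sqrt_pow2 less_eq_real_def)
  then show ?thesis
    unfolding outage_def prob_n_below_def ord_stat_less_iff[OF assms(1)] by simp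
qed

lemma sets_n_below:
  fixes Y :: "nat \<Rightarrow> 'a \<Rightarrow> real"
  assumes [measurable]: "\<And>i. i \<in> {1..N} \<Longrightarrow> Y i \<in> borel_measurable M"
  shows "{\<omega> \<in> space M. n \<le> card {i \<in> {1..N}. Y i \<omega> < s}} \<in> sets M"
proof -
  have "real (card {i \<in> {1..N}. Y i \<omega> < s}) = (\<Sum>i\<in>{1..N}. if Y i \<omega> < s then 1 else 0)" for \<omega>
    by (simp add: sum.If_cases Int_def conj_commute)
  moreover have "{\<omega> \<in> space M. real n \<le> (\<Sum>i\<in>{1..N}. if Y i \<omega> < s then (1::real) else 0)} \<in> sets M"
    by measurable
  ultimately show ?thesis
    by simp
qed

lemma (in prob_space) prob_n_below_mono:
  assumes [measurable]: "\<And>i. i \<in> {1..N} \<Longrightarrow> Y' i \<in> borel_measurable M"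
    and below: "\<And>i \<omega>. i \<in> {1..N} \<Longrightarrow> \<omega> \<in> space M \<Longrightarrow> Y i \<omega> < s \<Longrightarrow> Y' i \<omega> < s'"
  shows "prob_n_below M N Y n s \<le> prob_n_below M N Y' n s'"
  unfolding prob_n_below_def
proof (intro finite_measure_mono sets_n_below subsetI)
  fix \<omega> assume "\<omega> \<in> {\<omega> \<in> space M. n \<le> card {i \<in> {1..N}. Y i \<omega> < s}}"
  moreover from this have "card {i \<in> {1..N}. Y i \<omega> < s} \<le> card {i \<in> {1..N}. Y' i \<omega> < s'}"
    using below by (intro card_mono) auto
  ultimately show "\<omega> \<in> {\<omega> \<in> space M. n \<le> card {i \<in> {1..N}. Y' i \<omega> < s'}}"
    by auto
qed auto

section \<open>Phase quantization\<close>

lemma abs_quant_err_le: "\<bar>quant_err b th\<bar> \<le> qstep b / 2"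
proof -
  have q: "0 < qstep b"
    by (simp add: qstep_def)
  have "qstep b * \<lfloor>th / qstep b\<rfloor> \<le> th"
    using q mult_left_mono[OF of_int_floor_le[of "th / qstep b"], of "qstep b"] by simp
  moreover have "th < qstep b * (\<lfloor>th / qstep b\<rfloor> + 1)"
    using q mult_strict_left_mono[OF real_of_int_floor_add_one_gt[of "th / qstep b"], of "qstep b"] by simp
  ultimately show ?thesis
    unfolding quant_err_def by (auto simp: algebra_simps abs_if)
qed

lemma cos_half_qstep_pos: "2 \<le> b \<Longrightarrow> 0 < cos (qstep b / 2)"
proof -
  assume "2 \<le> b"
  then have "(2::real) ^ 2 \<le> 2 ^ b"
    by (intro power_increasing) auto
  then show ?thesis
    unfolding qstep_def using pi_gt_zero by (intro cos_gt_zero) (auto simp: field_simps)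
qed

lemma Y_disc_le_Y_cont:
  assumes "0 \<le> \<beta>"
  shows "Y_disc b \<beta> K tht G g n \<omega> \<le> Y_cont \<beta> K G g n \<omega>"
proof -
  have "cmod (\<Sum>k=1..K. complex_of_real (cmod (G n k \<omega>) * cmod (g n k \<omega>))
                 * cis (quant_err b (theta_bar (tht n) (G n k \<omega>) (g n k \<omega>))))
     \<le> (\<Sum>k=1..K. cmod (G n k \<omega>) * cmod (g n k \<omega>))"
    by (rule order.trans[OF norm_sum]) (simp add: norm_mult)
  then show ?thesis
    unfolding Y_disc_def Y_cont_def using assms by (intro mult_left_mono)
qed

text \<open>Every quantization error lies in \<open>[-\<Delta>/2, \<Delta>/2]\<close>, so the real part of each term
  of \<open>Y_disc\<close> is at least \<open>cos (\<Delta>/2)\<close> times its modulus.\<close>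
lemma cos_half_qstep_mult_Y_cont_le:
  assumes "0 \<le> \<beta>"
  shows "cos (qstep b / 2) * Y_cont \<beta> K G g n \<omega> \<le> Y_disc b \<beta> K tht G g n \<omega>"
proof -
  define e where "e k = quant_err b (theta_bar (tht n) (G n k \<omega>) (g n k \<omega>))" for k
  define r where "r k = cmod (G n k \<omega>) * cmod (g n k \<omega>)" for k
  have "qstep b / 2 \<le> pi"
    by (simp add: qstep_def divide_le_eq)
  then have cos_e: "cos (qstep b / 2) \<le> cos (e k)" for k
    using abs_quant_err_le[of b] cos_monotone_0_pi_le[of "\<bar>e k\<bar>" "qstep b / 2"]
    by (simp add: e_def)
  have "cos (qstep b / 2) * (\<Sum>k=1..K. r k) \<le> (\<Sum>k=1..K. r k * cos (e k))"
    unfolding sum_distrib_left using cos_e by (intro sum_mono) (simp add: r_def mult.commute mult_right_mono)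
  also have "\<dots> = Re (\<Sum>k=1..K. complex_of_real (r k) * cis (e k))"
    by (simp add: Re_sum)
  also have "\<dots> \<le> cmod (\<Sum>k=1..K. complex_of_real (r k) * cis (e k))"
    by (rule complex_Re_le_cmod)
  finally have "\<beta> * (cos (qstep b / 2) * (\<Sum>k=1..K. r k))
      \<le> \<beta> * cmod (\<Sum>k=1..K. complex_of_real (r k) * cis (e k))"
    using assms by (rule mult_left_mono)
  moreover have "cos (qstep b / 2) * Y_cont \<beta> K G g n \<omega> = \<beta> * (cos (qstep b / 2) * (\<Sum>k=1..K. r k))"
    unfolding Y_cont_def r_def by (rule mult.left_commute)
  moreover have "Y_disc b \<beta> K tht G g n \<omega> = \<beta> * cmod (\<Sum>k=1..K. complex_of_real (r k) * cis (e k))"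
    unfolding Y_disc_def e_def r_def ..
  ultimately show ?thesis
    by linarith
qed

lemma Y_cont_nonneg: "0 \<le> \<beta> \<Longrightarrow> 0 \<le> Y_cont \<beta> K G g n \<omega>"
  unfolding Y_cont_def by (intro mult_nonneg_nonneg sum_nonneg) auto

lemma Y_disc_nonneg: "0 \<le> \<beta> \<Longrightarrow> 0 \<le> Y_disc b \<beta> K tht G g n \<omega>"
  unfolding Y_disc_def by auto

lemma borel_measurable_Arg[measurable]: "Arg \<in> borel_measurable borel"
proof -
  define A where "A = - (\<real>\<^sub>\<le>\<^sub>0 :: complex set)"
  have "open A"
    unfolding A_def by (simp add: closed_nonpos_Reals_complex open_Compl)
  then have [measurable]: "(\<lambda>z. if z \<in> A then Arg z else pi) \<in> borel_measurable borel"
    by (intro borel_measurable_continuous_on_if) (auto simp: A_def intro: continuous_on_Arg)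
  have "Arg = (\<lambda>z. if z = 0 then 0 else if z \<in> A then Arg z else pi)"
    by (auto simp: fun_eq_iff A_def Arg_zero complex_nonpos_Reals_iff Arg_real complex_is_Real_iff complex_eq_iff)
  then show ?thesis
    by (subst (1) \<open>Arg = _\<close>) measurable
qed

lemma borel_measurable_cis[measurable]: "cis \<in> borel_measurable borel"
proof -
  have "continuous_on UNIV cis"
    unfolding cis_conv_exp by (intro continuous_intros)
  then show ?thesis
    by (rule borel_measurable_continuous_onI)
qed

lemma borel_measurable_quant_err[measurable]: "quant_err b \<in> borel_measurable borel"
  unfolding quant_err_def by measurable

lemma borel_measurable_Y_cont:
  assumes "\<And>k. k \<in> {1..K} \<Longrightarrow> G n k \<in> borel_measurable M"
    and "\<And>k. k \<in> {1..K} \<Longrightarrow> g n k \<in> borel_measurable M"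
  shows "Y_cont \<beta> K G g n \<in> borel_measurable M"
  unfolding Y_cont_def using assms by measurable

lemma borel_measurable_Y_disc:
  assumes "\<And>k. k \<in> {1..K} \<Longrightarrow> G n k \<in> borel_measurable M"
    and "\<And>k. k \<in> {1..K} \<Longrightarrow> g n k \<in> borel_measurable M"
  shows "Y_disc b \<beta> K tht G g n \<in> borel_measurable M"
  unfolding Y_disc_def theta_bar_def using assms by measurable

section \<open>Outage exponents\<close>

lemma bigthetaI_nonneg_real:
  fixes f g :: "'a \<Rightarrow> real"
  assumes "0 < c" and bounds: "\<forall>\<^sub>F x in F. 0 \<le> g x \<and> c * g x \<le> f x \<and> f x \<le> C * g x"
  shows "f \<in> \<Theta>[F](g)"
proof
  have "\<forall>\<^sub>F x in F. 0 \<le> f x"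
    using bounds by eventually_elim (use \<open>0 < c\<close> in \<open>auto intro: order.trans[rotated]\<close>)
  with bounds show "f \<in> O[F](g)"
    by (intro bigoI[of _ C]) (auto elim: eventually_elim2)
  from bounds show "f \<in> \<Omega>[F](g)"
    by (intro landau_omega.bigI[OF \<open>0 < c\<close>]) (auto elim!: eventually_mono)
qed

lemma tendsto_neg_ln_div_ln_of_bigtheta:
  fixes P :: "real \<Rightarrow> real"
  assumes nonneg: "\<forall>\<^sub>F \<rho> in at_top. 0 \<le> P \<rho>" and P: "P \<in> \<Theta>(\<lambda>\<rho>. \<rho> powr (- a))"
  shows "((\<lambda>\<rho>. - ln (P \<rho>) / ln \<rho>) \<longlongrightarrow> a) at_top"
proof -
  obtain c1 where "0 < c1" and lower: "\<forall>\<^sub>F \<rho> in at_top. c1 * \<rho> powr (- a) \<le> P \<rho>"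
    using landau_omega.bigE_nonneg_real[OF bigthetaD2[OF P] nonneg] by auto
  obtain c2 where "0 < c2" and upper: "\<forall>\<^sub>F \<rho> in at_top. P \<rho> \<le> c2 * \<rho> powr (- a)"
    using landau_o.bigE_nonneg_real[OF bigthetaD1[OF P] nonneg] by auto
  have "\<forall>\<^sub>F \<rho> in at_top. 0 < ln \<rho> \<and> ln c1 - a * ln \<rho> \<le> ln (P \<rho>) \<and> ln (P \<rho>) \<le> ln c2 - a * ln \<rho>"
    using lower upper eventually_gt_at_top[of 1]
  proof eventually_elim
    case (elim \<rho>)
    moreover have "0 < c1 * \<rho> powr (- a)"
      using \<open>0 < c1\<close> elim by simp
    ultimately have "ln (c1 * \<rho> powr (- a)) \<le> ln (P \<rho>)" "ln (P \<rho>) \<le> ln (c2 * \<rho> powr (- a))"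
      by simp_all
    then show ?case
      using elim \<open>0 < c1\<close> \<open>0 < c2\<close> by (simp add: ln_mult ln_powr)
  qed
  note bounds = this
  show ?thesis
  proof (rule tendsto_sandwich)
    show "\<forall>\<^sub>F \<rho> in at_top. (a * ln \<rho> - ln c2) / ln \<rho> \<le> - ln (P \<rho>) / ln \<rho>"
      using bounds by eventually_elim (rule divide_right_mono, linarith+)
    show "\<forall>\<^sub>F \<rho> in at_top. - ln (P \<rho>) / ln \<rho> \<le> (a * ln \<rho> - ln c1) / ln \<rho>"
      using bounds by eventually_elim (rule divide_right_mono, linarith+)
    show "((\<lambda>\<rho>. (a * ln \<rho> - ln c2) / ln \<rho>) \<longlongrightarrow> a) at_top"
      by real_asymp
    show "((\<lambda>\<rho>. (a * ln \<rho> - ln c1) / ln \<rho>) \<longlongrightarrow> a) at_top"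
      by real_asymp
  qed
qed

lemma tendsto_neg_ln_div_ln_sqrt_of_bigtheta:
  fixes P :: "real \<Rightarrow> real"
  assumes "\<And>s. 0 \<le> P s" "P \<in> \<Theta>[at_right 0](\<lambda>s. s powr (2 * d))" "0 < c"
  shows "((\<lambda>\<rho>. - ln (P (sqrt (c / \<rho>))) / ln \<rho>) \<longlongrightarrow> d) at_top"
proof (rule tendsto_neg_ln_div_ln_of_bigtheta)
  have "filterlim (\<lambda>\<rho>. sqrt (c / \<rho>)) (at_right 0) at_top"
    using \<open>0 < c\<close> by real_asymp
  have sqrt_powr: "sqrt (c / \<rho>) powr (2 * d) = c powr d * \<rho> powr (- d)" if "0 < \<rho>" for \<rho>
  proof -
    have "sqrt (c / \<rho>) powr (2 * d) = (c / \<rho>) powr (1/2 * (2 * d))"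
      using that \<open>0 < c\<close> by (simp add: powr_half_sqrt[symmetric] powr_powr)
    then show ?thesis
      by (simp add: powr_divide powr_minus_divide)
  qed
  have "(\<lambda>\<rho>. P (sqrt (c / \<rho>))) \<in> \<Theta>(\<lambda>\<rho>. sqrt (c / \<rho>) powr (2 * d))"
    by (rule landau_theta.compose) fact+
  also have "(\<lambda>\<rho>. sqrt (c / \<rho>) powr (2 * d)) \<in> \<Theta>(\<lambda>\<rho>. c powr d * \<rho> powr (- d))"
    using sqrt_powr by (intro bigthetaI_cong) (auto intro: eventually_mono[OF eventually_gt_at_top[of 0]])
  also have "(\<lambda>\<rho>. c powr d * \<rho> powr (- d)) \<in> \<Theta>(\<lambda>\<rho>. \<rho> powr (- d))"
    using \<open>0 < c\<close> by simp
  finally show "(\<lambda>\<rho>. P (sqrt (c / \<rho>))) \<in> \<Theta>(\<lambda>\<rho>. \<rho> powr (- d))" .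
qed (use assms(1) in simp)

lemma rho_max_eq_div:
  assumes "0 < \<rho>" "1 \<le> n"
  shows "rho_max N alpha R \<rho> n = rho_max N alpha R 1 n / \<rho>"
proof -
  have "rho_nl N alpha R \<rho> n l = rho_nl N alpha R 1 n l / \<rho>" for l
    by (simp add: rho_nl_def)
  moreover have "mono (\<lambda>x::real. x / \<rho>)"
    using assms by (intro monoI divide_right_mono) auto
  then have "Max (rho_nl N alpha R 1 n ` {1..n}) / \<rho> = Max ((\<lambda>x. x / \<rho>) ` rho_nl N alpha R 1 n ` {1..n})"
    using assms by (intro mono_Max_commute) auto
  ultimately show ?thesis
    unfolding rho_max_def image_image by simp
qed

lemma rho_max_pos:
  assumes "n \<in> {1..N}" "\<And>i. i \<in> {1..N} \<Longrightarrow> 0 < alpha i" "\<And>l. l \<in> {1..N} \<Longrightarrow> 0 < R l"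
    and "\<And>l. l \<in> {1..<N} \<Longrightarrow> 0 < alpha l - gam R l * (\<Sum>i=l+1..N. alpha i)"
  shows "0 < rho_max N alpha R 1 n"
proof -
  have "0 < gam R 1"
    using assms(1) assms(3)[of 1] by (simp add: gam_def)
  then have "0 < rho_nl N alpha R 1 n 1"
    using assms by (cases "N = 1") (auto simp: rho_nl_def)
  also have "\<dots> \<le> rho_max N alpha R 1 n"
    unfolding rho_max_def using assms(1) by (intro Max_ge) auto
  finally show ?thesis .
qed

lemma tendsto_outage_of_bigtheta:
  assumes "n \<in> {1..N}" "\<And>i \<omega>. 0 \<le> Y i \<omega>" "0 < rho_max N alpha R 1 n"
    and "prob_n_below M N Y n \<in> \<Theta>[at_right 0](\<lambda>s. s powr (2 * d))"
  shows "((\<lambda>\<rho>. - ln (outage M N Y (rho_max N alpha R \<rho> n) n) / ln \<rho>) \<longlongrightarrow> d) at_top"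
proof (rule Lim_transform_eventually)
  show "((\<lambda>\<rho>. - ln (prob_n_below M N Y n (sqrt (rho_max N alpha R 1 n / \<rho>))) / ln \<rho>) \<longlongrightarrow> d) at_top"
    by (rule tendsto_neg_ln_div_ln_sqrt_of_bigtheta[OF _ assms(4,3)]) (simp add: prob_n_below_def)
  show "\<forall>\<^sub>F \<rho> in at_top. - ln (prob_n_below M N Y n (sqrt (rho_max N alpha R 1 n / \<rho>))) / ln \<rho>
      = - ln (outage M N Y (rho_max N alpha R \<rho> n) n) / ln \<rho>"
    using eventually_gt_at_top[of 0]
  proof eventually_elim
    case (elim \<rho>)
    then show ?case
      using assms by (simp add: rho_max_eq_div[of \<rho> n] outage_eq_prob_n_below)
  qed
qed

section \<open>The cascaded channels\<close>

lemma (in prob_space) indep_vars_imp_indep_var: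
  assumes "indep_vars M' X I" "a \<in> I" "b \<in> I" "a \<noteq> b"
  shows "indep_var (M' a) (X a) (M' b) (X b)"
proof -
  have "indep_var (PiM {a} M') (\<lambda>\<omega>. restrict (\<lambda>i. X i \<omega>) {a}) (PiM {b} M') (\<lambda>\<omega>. restrict (\<lambda>i. X i \<omega>) {b})"
    using assms by (intro indep_var_restrict) auto
  from indep_var_compose[OF this measurable_component_singleton measurable_component_singleton]
  show ?thesis
    by (simp add: comp_def)
qed

locale nakagami_cascade = prob_space M for M :: "'a measure" +
  fixes N K :: nat and \<beta> mG mg :: real and G g :: "nat \<Rightarrow> nat \<Rightarrow> 'a \<Rightarrow> complex"
  assumes K_pos: "1 \<le> K" and beta_pos: "0 < \<beta>"
    and mG_pos: "0 < mG" and mg_pos: "0 < mg" and mG_neq_mg: "mG \<noteq> mg"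
    and indep: "indep_vars (\<lambda>_. borel) (\<lambda>(i, k, c). if c then G i k else g i k) ({1..N} \<times> {1..K} \<times> UNIV)"
    and distG: "\<And>i k. i \<in> {1..N} \<Longrightarrow> k \<in> {1..K} \<Longrightarrow>
                  distributed M lborel (\<lambda>\<omega>. cmod (G i k \<omega>)) (\<lambda>x. ennreal (nakagami_pdf mG x))"
    and distg: "\<And>i k. i \<in> {1..N} \<Longrightarrow> k \<in> {1..K} \<Longrightarrow>
                  distributed M lborel (\<lambda>\<omega>. cmod (g i k \<omega>)) (\<lambda>x. ennreal (nakagami_pdf mg x))"
begin

abbreviation ms :: real where
  "ms \<equiv> min mG mg"

definition cascade :: "nat \<Rightarrow> nat \<Rightarrow> 'a \<Rightarrow> real" where
  "cascade i k \<omega> = cmod (G i k \<omega>) * cmod (g i k \<omega>)"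

lemma
  assumes "i \<in> {1..N}" "k \<in> {1..K}"
  shows measurable_G[measurable]: "G i k \<in> borel_measurable M"
    and measurable_g[measurable]: "g i k \<in> borel_measurable M"
proof -
  have "random_variable borel ((\<lambda>(i, k, c). if c then G i k else g i k) (i, k, c))" for c
    using indep assms unfolding indep_vars_def by blast
  from this[of True] this[of False] show "G i k \<in> borel_measurable M" "g i k \<in> borel_measurable M"
    by simp_all
qed

lemma measurable_cascade[measurable]:
  "i \<in> {1..N} \<Longrightarrow> k \<in> {1..K} \<Longrightarrow> cascade i k \<in> borel_measurable M"
  unfolding cascade_def by measurable

lemma indep_var_abs_G_abs_g:
  assumes "i \<in> {1..N}" "k \<in> {1..K}"
  shows "indep_var borel (\<lambda>\<omega>. cmod (G i k \<omega>)) borel (\<lambda>\<omega>. cmod (g i k \<omega>))"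
    and "indep_var borel (\<lambda>\<omega>. cmod (g i k \<omega>)) borel (\<lambda>\<omega>. cmod (G i k \<omega>))"
  using indep_var_compose[OF indep_vars_imp_indep_var[OF indep, of "(i, k, True)" "(i, k, False)"]
      borel_measurable_norm borel_measurable_norm]
    indep_var_compose[OF indep_vars_imp_indep_var[OF indep, of "(i, k, False)" "(i, k, True)"]
      borel_measurable_norm borel_measurable_norm]
    assms by (simp_all add: comp_def)

lemma indep_cascade: "indep_vars (\<lambda>_. borel) (\<lambda>(i, k). cascade i k) ({1..N} \<times> {1..K})"
proof -
  define X where "X = (\<lambda>(i, k, c). if c then G i k else g i k)"
  define J :: "nat \<times> nat \<Rightarrow> (nat \<times> nat \<times> bool) set"
    where "J = (\<lambda>(i, k). {(i, k, True), (i, k, False)})"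
  have "indep_vars (\<lambda>j. PiM (J j) (\<lambda>_. borel)) (\<lambda>j \<omega>. restrict (\<lambda>x. X x \<omega>) (J j)) ({1..N} \<times> {1..K})"
    using indep[folded X_def] by (rule indep_vars_restrict) (auto simp: J_def disjoint_family_on_def)
  then have "indep_vars (\<lambda>_. borel)
      (\<lambda>j \<omega>. (\<lambda>f. cmod (f (fst j, snd j, True)) * cmod (f (fst j, snd j, False))) (restrict (\<lambda>x. X x \<omega>) (J j)))
      ({1..N} \<times> {1..K})"
  proof (rule indep_vars_compose2)
    fix j :: "nat \<times> nat"
    have "(\<lambda>f. f (fst j, snd j, c)) \<in> measurable (PiM (J j) (\<lambda>_. borel)) (borel :: complex measure)" for c
      by (rule measurable_component_singleton) (auto simp: J_def split: prod.splits)
    then show "(\<lambda>f. cmod (f (fst j, snd j, True)) * cmod (f (fst j, snd j, False)))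
        \<in> borel_measurable (PiM (J j) (\<lambda>_. borel))"
      by measurable
  qed
  then show ?thesis
    by (rule indep_vars_cong[THEN iffD1, rotated 3]) (auto simp: J_def X_def cascade_def fun_eq_iff)
qed

lemma cascade_prob_le:
  "\<exists>C. \<forall>i\<in>{1..N}. \<forall>k\<in>{1..K}. \<forall>r>0. prob {\<omega> \<in> space M. cascade i k \<omega> \<le> r} \<le> C * r powr (2*ms)"
proof (cases "mG < mg")
  case True
  have "prob {\<omega> \<in> space M. cascade i k \<omega> \<le> r}
      \<le> mG powr mG / Gamma mG / mG * (2 * mg powr mg / Gamma mg / (2*mg - 2*mG) + 1) * r powr (2*ms)"
    if "i \<in> {1..N}" "k \<in> {1..K}" "0 < r" for i k r
    using nakagami_product_prob_le[OF indep_var_abs_G_abs_g(2)[OF that(1,2)] distG[OF that(1,2)]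
        distg[OF that(1,2)]] True mG_pos that(3)
    by (simp add: cascade_def)
  then show ?thesis
    by blast
next
  case False
  then have "mg < mG"
    using mG_neq_mg by simp
  have "prob {\<omega> \<in> space M. cascade i k \<omega> \<le> r}
      \<le> mg powr mg / Gamma mg / mg * (2 * mG powr mG / Gamma mG / (2*mG - 2*mg) + 1) * r powr (2*ms)"
    if "i \<in> {1..N}" "k \<in> {1..K}" "0 < r" for i k r
    using nakagami_product_prob_le[OF indep_var_abs_G_abs_g(1)[OF that(1,2)] distg[OF that(1,2)]
        distG[OF that(1,2)]] \<open>mg < mG\<close> mg_pos that(3)
    by (simp add: cascade_def mult.commute)
  then show ?thesis
    by blast
qed

lemma cascade_prob_ge:
  "\<exists>c>0. \<forall>i\<in>{1..N}. \<forall>k\<in>{1..K}. \<forall>w. 0 \<le> w \<and> w \<le> 1 \<longrightarrow>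
     c * w powr (2*ms) \<le> prob {\<omega> \<in> space M. cascade i k \<omega> \<le> w}"
proof -
  define c where "c = mG powr mG / Gamma mG / mG * exp (- mG) * (mg powr mg / Gamma mg / mg * exp (- mg))"
  have "0 < c"
    using mG_pos mg_pos by (simp add: c_def Gamma_real_pos)
  moreover have "c * w powr (2*ms) \<le> prob {\<omega> \<in> space M. cascade i k \<omega> \<le> w}"
    if "i \<in> {1..N}" "k \<in> {1..K}" "0 \<le> w" "w \<le> 1" for i k w
  proof (cases "mG \<le> mg")
    case True
    then show ?thesis
      using that mG_pos mg_pos nakagami_product_prob_ge[OF indep_var_abs_G_abs_g(1)[OF that(1,2)]
          distG[OF that(1,2)] distg[OF that(1,2)]]
      by (simp add: c_def cascade_def)
  next
    case False
    then show ?thesis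
      using that mG_pos mg_pos nakagami_product_prob_ge[OF indep_var_abs_G_abs_g(2)[OF that(1,2)]
          distg[OF that(1,2)] distG[OF that(1,2)]]
      by (simp add: c_def cascade_def mult.commute mult.left_commute)
  qed
  ultimately show ?thesis
    by blast
qed

lemma cascade_le_of_Y_cont_less:
  assumes "Y_cont \<beta> K G g i \<omega> < s" "k \<in> {1..K}"
  shows "cascade i k \<omega> \<le> s / \<beta>"
proof -
  have "\<beta> * cascade i k \<omega> \<le> \<beta> * (\<Sum>k=1..K. cascade i k \<omega>)"
    using assms beta_pos by (intro mult_left_mono member_le_sum) (auto simp: cascade_def)
  also have "\<dots> < s"
    using assms by (simp add: Y_cont_def cascade_def)
  finally show ?thesis
    using beta_pos by (simp add: field_simps)
qed

lemma Y_cont_less_of_cascade_le: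
  assumes "\<And>k. k \<in> {1..K} \<Longrightarrow> cascade i k \<omega> \<le> s / (2 * \<beta> * K)" "0 < s"
  shows "Y_cont \<beta> K G g i \<omega> < s"
proof -
  have "Y_cont \<beta> K G g i \<omega> \<le> \<beta> * (\<Sum>k=1..K. s / (2 * \<beta> * K))"
    unfolding Y_cont_def using assms beta_pos by (intro mult_left_mono sum_mono) (auto simp: cascade_def)
  also have "\<dots> < s"
    using assms beta_pos K_pos by (simp add: field_simps)
  finally show ?thesis .
qed

definition cascades_le :: "nat set \<Rightarrow> real \<Rightarrow> 'a set" where
  "cascades_le I r = {\<omega> \<in> space M. \<forall>i\<in>I. \<forall>k\<in>{1..K}. cascade i k \<omega> \<le> r}"

lemma prob_cascades_le:
  assumes "finite I" "I \<subseteq> {1..N}" "I \<noteq> {}"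
  shows "prob (cascades_le I r) = (\<Prod>i\<in>I. \<Prod>k\<in>{1..K}. prob {\<omega> \<in> space M. cascade i k \<omega> \<le> r})"
proof -
  have "cascades_le I r = (\<Inter>j\<in>I \<times> {1..K}. (\<lambda>(i, k). cascade i k) j -` {..r} \<inter> space M)"
    using assms K_pos by (auto simp: cascades_le_def)
  also have "prob \<dots> = (\<Prod>j\<in>I \<times> {1..K}. prob ((\<lambda>(i, k). cascade i k) j -` {..r} \<inter> space M))"
    using assms K_pos by (intro indep_varsD[OF indep_cascade]) auto
  finally show ?thesis
    by (simp add: prod.cartesian_product vimage_def Int_def conj_commute split_beta)
qed

lemma prob_n_below_Y_cont_le:
  assumes "1 \<le> n" "0 < s"
    and cascade_le: "\<And>i k. i \<in> {1..N} \<Longrightarrow> k \<in> {1..K} \<Longrightarrow> prob {\<omega> \<in> space M. cascade i k \<omega> \<le> s / \<beta>} \<le> c"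
  shows "prob_n_below M N (Y_cont \<beta> K G g) n s \<le> real (N choose n) * c ^ (n * K)"
proof -
  define SS where "SS = {S. S \<subseteq> {1..N} \<and> card S = n}"
  have SS: "finite S" "S \<subseteq> {1..N}" "card S = n" "S \<noteq> {}" if "S \<in> SS" for S
    using that assms(1) by (auto simp: SS_def intro: finite_subset)
  have "finite SS"
    unfolding SS_def by (rule finite_subset[of _ "Pow {1..N}"]) auto
  have sets: "cascades_le S (s / \<beta>) \<in> sets M" if "S \<in> SS" for S
    unfolding cascades_le_def by measurable (use SS[OF that] in auto)
  have "{\<omega> \<in> space M. n \<le> card {i \<in> {1..N}. Y_cont \<beta> K G g i \<omega> < s}} \<subseteq> (\<Union>S\<in>SS. cascades_le S (s / \<beta>))"
  proof
    fix \<omega> assume \<omega>: "\<omega> \<in> {\<omega> \<in> space M. n \<le> card {i \<in> {1..N}. Y_cont \<beta> K G g i \<omega> < s}}"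
    then obtain S where S: "S \<subseteq> {i \<in> {1..N}. Y_cont \<beta> K G g i \<omega> < s}" "card S = n"
      using obtain_subset_with_card_n by blast
    then have "S \<in> SS"
      by (auto simp: SS_def)
    moreover have "\<omega> \<in> cascades_le S (s / \<beta>)"
      using \<omega> S by (auto simp: cascades_le_def intro: cascade_le_of_Y_cont_less)
    ultimately show "\<omega> \<in> (\<Union>S\<in>SS. cascades_le S (s / \<beta>))"
      by blast
  qed
  then have "prob_n_below M N (Y_cont \<beta> K G g) n s \<le> prob (\<Union>S\<in>SS. cascades_le S (s / \<beta>))"
    unfolding prob_n_below_def using sets \<open>finite SS\<close> by (intro finite_measure_mono) auto
  also have "\<dots> \<le> (\<Sum>S\<in>SS. prob (cascades_le S (s / \<beta>)))"
    using sets \<open>finite SS\<close> by (intro finite_measure_subadditive_finite) auto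
  also have "\<dots> \<le> (\<Sum>S\<in>SS. \<Prod>i\<in>S. \<Prod>k\<in>{1..K}. c)"
  proof (intro sum_mono)
    fix S assume "S \<in> SS"
    show "prob (cascades_le S (s / \<beta>)) \<le> (\<Prod>i\<in>S. \<Prod>k\<in>{1..K}. c)"
      unfolding prob_cascades_le[OF SS(1,2,4)[OF \<open>S \<in> SS\<close>]]
      using SS(2)[OF \<open>S \<in> SS\<close>] cascade_le by (intro prod_mono conjI prod_nonneg) auto
  qed
  also have "\<dots> = (\<Sum>S\<in>SS. c ^ (n * K))"
    using SS by (intro sum.cong) (simp_all add: power_mult[symmetric] mult.commute)
  also have "\<dots> = real (N choose n) * c ^ (n * K)"
    by (simp add: SS_def n_subsets)
  finally show ?thesis .
qed

lemma prob_n_below_Y_cont_ge: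
  assumes "n \<in> {1..N}" "0 < s" "0 \<le> c"
    and cascade_ge: "\<And>i k. i \<in> {1..N} \<Longrightarrow> k \<in> {1..K} \<Longrightarrow>
      c \<le> prob {\<omega> \<in> space M. cascade i k \<omega> \<le> s / (2 * \<beta> * K)}"
  shows "c ^ (n * K) \<le> prob_n_below M N (Y_cont \<beta> K G g) n s"
proof -
  have "c ^ (n * K) = (\<Prod>i\<in>{1..n}. \<Prod>k\<in>{1..K}. c)"
    by (simp add: power_mult mult.commute)
  also have "\<dots> \<le> (\<Prod>i\<in>{1..n}. \<Prod>k\<in>{1..K}. prob {\<omega> \<in> space M. cascade i k \<omega> \<le> s / (2 * \<beta> * K)})"
    using assms by (intro prod_mono conjI prod_nonneg) auto
  also have "\<dots> = prob (cascades_le {1..n} (s / (2 * \<beta> * K)))"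
    using assms by (simp add: prob_cascades_le)
  also have "\<dots> \<le> prob_n_below M N (Y_cont \<beta> K G g) n s"
    unfolding prob_n_below_def
  proof (intro finite_measure_mono sets_n_below borel_measurable_Y_cont subsetI)
    fix \<omega> assume \<omega>: "\<omega> \<in> cascades_le {1..n} (s / (2 * \<beta> * K))"
    then have "{1..n} \<subseteq> {i \<in> {1..N}. Y_cont \<beta> K G g i \<omega> < s}"
      using assms by (auto simp: cascades_le_def intro: Y_cont_less_of_cascade_le)
    from card_mono[OF _ this] show "\<omega> \<in> {\<omega> \<in> space M. n \<le> card {i \<in> {1..N}. Y_cont \<beta> K G g i \<omega> < s}}"
      using \<omega> by (simp add: cascades_le_def)
  qed auto
  finally show ?thesis .
qed

lemma prob_n_below_Y_cont_bounds:
  assumes "n \<in> {1..N}"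
  obtains c1 c2 where "0 < c1"
    and "\<And>s. 0 < s \<Longrightarrow> prob_n_below M N (Y_cont \<beta> K G g) n s \<le> c2 * s powr (2 * (n * ms * K))"
    and "\<And>s. 0 < s \<Longrightarrow> s \<le> 2 * \<beta> * K \<Longrightarrow> c1 * s powr (2 * (n * ms * K)) \<le> prob_n_below M N (Y_cont \<beta> K G g) n s"
proof -
  obtain C where C: "\<And>i k r. i \<in> {1..N} \<Longrightarrow> k \<in> {1..K} \<Longrightarrow> 0 < r \<Longrightarrow>
      prob {\<omega> \<in> space M. cascade i k \<omega> \<le> r} \<le> C * r powr (2*ms)"
    using cascade_prob_le by blast
  obtain c where "0 < c" and c: "\<And>i k w. i \<in> {1..N} \<Longrightarrow> k \<in> {1..K} \<Longrightarrow> 0 \<le> w \<Longrightarrow> w \<le> 1 \<Longrightarrow>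
      c * w powr (2*ms) \<le> prob {\<omega> \<in> space M. cascade i k \<omega> \<le> w}"
    using cascade_prob_ge by blast
  have powr_eq: "(a * (s / t) powr (2*ms)) ^ (n * K) = (a / t powr (2*ms)) ^ (n * K) * s powr (2 * (n * ms * K))"
    if "0 < s" for a s t :: real
  proof -
    have "(a * (s / t) powr (2*ms)) ^ (n * K) = (a / t powr (2*ms)) ^ (n * K) * (s powr (2*ms)) ^ (n * K)"
      by (simp add: powr_divide power_mult_distrib[symmetric])
    also have "(s powr (2*ms)) ^ (n * K) = s powr (2 * (n * ms * K))"
      using that by (simp add: powr_power mult_ac)
    finally show ?thesis .
  qed
  show ?thesis
  proof
    show "0 < (c / (2 * \<beta> * K) powr (2*ms)) ^ (n * K)"
      using \<open>0 < c\<close> beta_pos K_pos by simp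
    fix s :: real
    assume "0 < s"
    have "prob_n_below M N (Y_cont \<beta> K G g) n s \<le> real (N choose n) * (C * (s / \<beta>) powr (2*ms)) ^ (n * K)"
      using assms \<open>0 < s\<close> beta_pos C by (intro prob_n_below_Y_cont_le) auto
    then show "prob_n_below M N (Y_cont \<beta> K G g) n s
        \<le> real (N choose n) * (C / \<beta> powr (2*ms)) ^ (n * K) * s powr (2 * (n * ms * K))"
      using \<open>0 < s\<close> beta_pos by (simp add: powr_eq)
    assume "s \<le> 2 * \<beta> * K"
    then have "(c * (s / (2 * \<beta> * K)) powr (2*ms)) ^ (n * K) \<le> prob_n_below M N (Y_cont \<beta> K G g) n s"
      using assms \<open>0 < s\<close> \<open>0 < c\<close> beta_pos K_pos c by (intro prob_n_below_Y_cont_ge) auto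
    then show "(c / (2 * \<beta> * K) powr (2*ms)) ^ (n * K) * s powr (2 * (n * ms * K))
        \<le> prob_n_below M N (Y_cont \<beta> K G g) n s"
      using \<open>0 < s\<close> beta_pos K_pos by (simp add: powr_eq)
  qed
qed

lemma eventually_le_2_beta_K_at_right_0: "\<forall>\<^sub>F s in at_right 0. 0 < s \<and> s \<le> 2 * \<beta> * K"
  using beta_pos K_pos by (intro eventually_conj eventually_at_right_less eventually_at_rightI[of 0 "2 * \<beta> * K"]) auto

lemma prob_n_below_Y_cont_bigtheta:
  assumes "n \<in> {1..N}"
  shows "prob_n_below M N (Y_cont \<beta> K G g) n \<in> \<Theta>[at_right 0](\<lambda>s. s powr (2 * (n * ms * K)))"
proof -
  obtain c1 c2 where "0 < c1"
    and "\<And>s. 0 < s \<Longrightarrow> prob_n_below M N (Y_cont \<beta> K G g) n s \<le> c2 * s powr (2 * (n * ms * K))"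
    and "\<And>s. 0 < s \<Longrightarrow> s \<le> 2 * \<beta> * K \<Longrightarrow> c1 * s powr (2 * (n * ms * K)) \<le> prob_n_below M N (Y_cont \<beta> K G g) n s"
    using prob_n_below_Y_cont_bounds[OF assms] by blast
  with eventually_le_2_beta_K_at_right_0 show ?thesis
    by (intro bigthetaI_nonneg_real[where c = c1 and C = c2]) (auto elim!: eventually_mono)
qed

text \<open>Phase quantization shrinks every gain by at most the factor \<open>cos (\<Delta>/2)\<close>, so the discrete
  outage event at \<open>s\<close> lies between the continuous ones at \<open>s\<close> and \<open>s / cos (\<Delta>/2)\<close>.\<close>
lemma prob_n_below_Y_disc_bigtheta:
  assumes "n \<in> {1..N}" "2 \<le> b"
  shows "prob_n_below M N (Y_disc b \<beta> K tht G g) n \<in> \<Theta>[at_right 0](\<lambda>s. s powr (2 * (n * ms * K)))"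
proof -
  define \<kappa> where "\<kappa> = cos (qstep b / 2)"
  have "0 < \<kappa>"
    unfolding \<kappa>_def using assms(2) by (rule cos_half_qstep_pos)
  obtain c1 c2 where "0 < c1"
    and up: "\<And>s. 0 < s \<Longrightarrow> prob_n_below M N (Y_cont \<beta> K G g) n s \<le> c2 * s powr (2 * (n * ms * K))"
    and low: "\<And>s. 0 < s \<Longrightarrow> s \<le> 2 * \<beta> * K \<Longrightarrow> c1 * s powr (2 * (n * ms * K)) \<le> prob_n_below M N (Y_cont \<beta> K G g) n s"
    using prob_n_below_Y_cont_bounds[OF assms(1)] by blast
  have measurable_Y: "Y_cont \<beta> K G g i \<in> borel_measurable M" "Y_disc b \<beta> K tht G g i \<in> borel_measurable M"
    if "i \<in> {1..N}" for i
    using that by (auto intro!: borel_measurable_Y_cont borel_measurable_Y_disc)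
  from eventually_le_2_beta_K_at_right_0
  have "\<forall>\<^sub>F s in at_right 0. c1 * s powr (2 * (n * ms * K)) \<le> prob_n_below M N (Y_disc b \<beta> K tht G g) n s
      \<and> prob_n_below M N (Y_disc b \<beta> K tht G g) n s \<le> c2 / \<kappa> powr (2 * (n * ms * K)) * s powr (2 * (n * ms * K))"
  proof eventually_elim
    case (elim s)
    have "c1 * s powr (2 * (n * ms * K)) \<le> prob_n_below M N (Y_cont \<beta> K G g) n s"
      using elim by (intro low) auto
    also have "\<dots> \<le> prob_n_below M N (Y_disc b \<beta> K tht G g) n s"
      by (intro prob_n_below_mono measurable_Y)
         (auto intro: order.strict_trans1[OF Y_disc_le_Y_cont[OF less_imp_le[OF beta_pos]]])
    finally have lower: "c1 * s powr (2 * (n * ms * K)) \<le> prob_n_below M N (Y_disc b \<beta> K tht G g) n s" .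
    have "prob_n_below M N (Y_disc b \<beta> K tht G g) n s \<le> prob_n_below M N (Y_cont \<beta> K G g) n (s / \<kappa>)"
      using cos_half_qstep_mult_Y_cont_le[of \<beta> b K G g] beta_pos \<open>0 < \<kappa>\<close>
      by (intro prob_n_below_mono measurable_Y) (auto simp: \<kappa>_def field_simps intro: le_less_trans)
    also have "\<dots> \<le> c2 * (s / \<kappa>) powr (2 * (n * ms * K))"
      using elim \<open>0 < \<kappa>\<close> by (intro up) simp
    also have "\<dots> = c2 / \<kappa> powr (2 * (n * ms * K)) * s powr (2 * (n * ms * K))"
      by (simp add: powr_divide)
    finally show ?case
      using lower by simp
  qed
  with \<open>0 < c1\<close> show ?thesis
    by (intro bigthetaI_nonneg_real[where c = c1 and C = "c2 / \<kappa> powr (2 * (n * ms * K))"])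
       (auto elim!: eventually_mono)
qed

end

theorem corollary1:
  fixes M :: "'a measure"
    and N K b :: nat and \<beta> mG mg :: real
    and G g :: "nat \<Rightarrow> nat \<Rightarrow> 'a \<Rightarrow> complex"
    and tht :: "nat \<Rightarrow> real"
    and alpha R :: "nat \<Rightarrow> real"
    and n :: nat
  assumes M: "prob_space M"
    and N: "N \<ge> 1" and K: "K \<ge> 1" and b: "b \<ge> 2"
    and beta: "0 < \<beta>" "\<beta> \<le> 1"
    and mG: "mG \<ge> 1/2" and mg: "mg \<ge> 1/2" and mGg: "mG \<noteq> mg"
    and indep: "prob_space.indep_vars M (\<lambda>_. borel)
                  (\<lambda>(i, k, c). if c then G i k else g i k) ({1..N} \<times> {1..K} \<times> UNIV)"
    and distG: "\<And>i k. i \<in> {1..N} \<Longrightarrow> k \<in> {1..K} \<Longrightarrow>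
                  distributed M lborel (\<lambda>\<omega>. cmod (G i k \<omega>)) (\<lambda>x. ennreal (nakagami_pdf mG x))"
    and distg: "\<And>i k. i \<in> {1..N} \<Longrightarrow> k \<in> {1..K} \<Longrightarrow>
                  distributed M lborel (\<lambda>\<omega>. cmod (g i k \<omega>)) (\<lambda>x. ennreal (nakagami_pdf mg x))"
    and tht: "\<And>i. i \<in> {1..N} \<Longrightarrow> 0 \<le> tht i \<and> tht i < 2 * pi"
    and alpha_pos: "\<And>i. i \<in> {1..N} \<Longrightarrow> alpha i > 0"
    and alpha_dec: "\<And>i. i \<in> {1..<N} \<Longrightarrow> alpha i > alpha (i + 1)"
    and alpha_sum: "(\<Sum>i=1..N. alpha i) = 1"
    and R_pos: "\<And>l. l \<in> {1..N} \<Longrightarrow> R l > 0"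
    and feas: "\<And>l. l \<in> {1..<N} \<Longrightarrow> alpha l - gam R l * (\<Sum>i=l+1..N. alpha i) > 0"
    and n: "n \<in> {1..N}"
  shows "((\<lambda>\<rho>. - ln (outage M N (Y_disc b \<beta> K tht G g) (rho_max N alpha R \<rho> n) n) / ln \<rho>)
            \<longlongrightarrow> real n * min mG mg * real K) at_top
       \<and> ((\<lambda>\<rho>. - ln (outage M N (Y_cont \<beta> K G g) (rho_max N alpha R \<rho> n) n) / ln \<rho>)
            \<longlongrightarrow> real n * min mG mg * real K) at_top"
proof -
  interpret nakagami_cascade M N K \<beta> mG mg G g
    using M K beta mG mg mGg indep distG distg
    by (intro nakagami_cascade.intro nakagami_cascade_axioms.intro) auto
  have "0 < rho_max N alpha R 1 n"
    using n alpha_pos R_pos feas by (rule rho_max_pos)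
  moreover have "\<And>i \<omega>. 0 \<le> Y_disc b \<beta> K tht G g i \<omega>" "\<And>i \<omega>. 0 \<le> Y_cont \<beta> K G g i \<omega>"
    using beta by (simp_all add: Y_disc_nonneg Y_cont_nonneg)
  ultimately show ?thesis
    using tendsto_outage_of_bigtheta[OF n _ _ prob_n_below_Y_disc_bigtheta[OF n b]]
      tendsto_outage_of_bigtheta[OF n _ _ prob_n_below_Y_cont_bigtheta[OF n]]
    by blast
qed

end
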